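(* Let $X$ be a metrizable space and let $\mathcal{K}$ be the ideal of all closed compact subsets of $X$. If $C(X)_\mathcal{K}$ is closed under uniform limits (i.e. whenever a sequence in $C(X)_\mathcal{K}$ converges uniformly on $X$ to some $f\in\mathbb{R}^X$, then $f\in C(X)_\mathcal{K}$), then the set of all non-isolated points of $X$ is a member of $\mathcal{K}$.
   Context: For $f\in\mathbb{R}^X$, $D_f$ denotes the set of points of discontinuity of $f$. For an ideal $\mathcal{P}$ of closed subsets of $X$ (a family of closed sets closed under finite unions and under passing to closed subsets), $C(X)_\mathcal{P}=\{f\in\mathbb{R}^X\colon \overline{D_f}\in\mathcal{P}\}$. *)

theory Defs
  imports "HOL-Analysis.Analysis"
begin

definition discont_points :: "'a topology \<Rightarrow> ('a \<Rightarrow> real) \<Rightarrow> 'a set" where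
  "discont_points X f = {x \<in> topspace X.
      \<not> (\<forall>e>0. \<exists>U. openin X U \<and> x \<in> U \<and> (\<forall>y\<in>U. \<bar>f y - f x\<bar> < e))}"

definition compact_ideal :: "'a topology \<Rightarrow> 'a set set" where
  "compact_ideal X = {K. K \<subseteq> topspace X \<and> closedin X K \<and> compactin X K}"

definition C_ideal :: "'a topology \<Rightarrow> 'a set set \<Rightarrow> ('a \<Rightarrow> real) set" where
  "C_ideal X P = {f. X closure_of (discont_points X f) \<in> P}"

definition unif_conv_on :: "'a topology \<Rightarrow> (nat \<Rightarrow> 'a \<Rightarrow> real) \<Rightarrow> ('a \<Rightarrow> real) \<Rightarrow> bool" where
  "unif_conv_on X g f \<longleftrightarrow>
     (\<forall>e>0. \<exists>N. \<forall>n\<ge>N. \<forall>x\<in>topspace X. \<bar>g n x - f x\<bar> < e)"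

end

theory Submission
  imports Defs
begin

text \<open>If the set \<open>X'\<close> of non-isolated points (closed, as \<open>X\<close> is Hausdorff) were not compact,
  Bolzano-Weierstrass in the metric space \<open>X\<close> would give distinct points \<open>x\<^sub>n \<in> X'\<close> without
  accumulation points. The function \<open>w\<close> with \<open>w x\<^sub>n = 1/(n+1)\<close> and \<open>w = 0\<close> elsewhere is
  discontinuous exactly on the closed, non-compact set \<open>{x\<^sub>n}\<close>, so it is not in \<open>C(X)\<^sub>\<K>\<close>; yet it
  is the uniform limit of its truncations to \<open>{x\<^sub>0, ..., x\<^sub>k\<^sub>-\<^sub>1}\<close>, whose discontinuity sets are
  finite.\<close>

lemma metrizable_noncompact_closedin_discrete_sequence:
  assumes "metrizable_space X" "closedin X S" "\<not> compactin X S"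
  obtains f :: "nat \<Rightarrow> 'a" where "inj f" "range f \<subseteq> S" "X derived_set_of range f = {}"
proof -
  obtain M d where M: "Metric_space M d" and X: "X = Metric_space.mtopology M d"
    using assms(1) metrizable_space_def by blast
  have "S \<subseteq> M"
    using closedin_subset[OF assms(2)] Metric_space.topspace_mtopology[OF M] unfolding X by simp
  moreover have "compactin X S \<longleftrightarrow>
      S \<subseteq> M \<and> (\<forall>T. T \<subseteq> S \<and> infinite T \<longrightarrow> S \<inter> X derived_set_of T \<noteq> {})"
    unfolding X by (rule Metric_space.compactin_eq_Bolzano_Weierstrass[OF M])
  ultimately obtain T where T: "T \<subseteq> S" "infinite T" "S \<inter> X derived_set_of T = {}"
    using assms(3) by auto
  have "X derived_set_of T \<subseteq> S"
    using derived_set_of_mono[OF T(1), of X] assms(2) by (auto simp: closedin_contains_derived_set)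
  with T(3) have no_limits: "X derived_set_of T = {}"
    by blast
  obtain f :: "nat \<Rightarrow> 'a" where f: "inj f" "range f \<subseteq> T"
    using infinite_countable_subset[OF T(2)] by blast
  show thesis
  proof (rule that)
    show "inj f" "range f \<subseteq> S"
      using f T(1) by auto
    show "X derived_set_of range f = {}"
      using no_limits derived_set_of_mono[OF f(2), of X] by blast
  qed
qed

lemma discont_points_subset_closure_support:
  "discont_points X h \<subseteq> X closure_of {x. h x \<noteq> 0}"
proof
  fix y assume y: "y \<in> discont_points X h"
  show "y \<in> X closure_of {x. h x \<noteq> 0}"
  proof (rule ccontr)
    assume "y \<notin> X closure_of {x. h x \<noteq> 0}"
    then obtain U where U: "openin X U" "y \<in> U" "\<forall>z\<in>U. h z = 0"
      using y by (auto simp: in_closure_of discont_points_def)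
    then have "\<forall>e>0. \<exists>U. openin X U \<and> y \<in> U \<and> (\<forall>z\<in>U. \<bar>h z - h y\<bar> < e)"
      by auto
    with y show False
      unfolding discont_points_def by blast
  qed
qed

lemma discont_points_if_isolated_in_support:
  assumes y: "y \<in> X derived_set_of topspace X" "h y \<noteq> 0"
    and isolated: "y \<notin> X derived_set_of {x. h x \<noteq> 0}"
  shows "y \<in> discont_points X h"
proof -
  have "y \<in> topspace X"
    using y(1) by (simp add: in_derived_set_of)
  then obtain U where U: "openin X U" "y \<in> U" "\<And>z. z \<in> U \<Longrightarrow> z \<noteq> y \<Longrightarrow> h z = 0"
    using isolated by (auto simp: in_derived_set_of)
  have "\<not> (\<exists>V. openin X V \<and> y \<in> V \<and> (\<forall>z\<in>V. \<bar>h z - h y\<bar> < \<bar>h y\<bar>))"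
  proof
    assume "\<exists>V. openin X V \<and> y \<in> V \<and> (\<forall>z\<in>V. \<bar>h z - h y\<bar> < \<bar>h y\<bar>)"
    then obtain V where V: "openin X V" "y \<in> V" "\<forall>z\<in>V. \<bar>h z - h y\<bar> < \<bar>h y\<bar>"
      by blast
    obtain z where "z \<noteq> y" "z \<in> U \<inter> V"
      using y(1) U V openin_Int[OF U(1) V(1)] by (auto simp: in_derived_set_of)
    with U(3) V(3) show False
      by force
  qed
  then have "\<not> (\<forall>e>0. \<exists>V. openin X V \<and> y \<in> V \<and> (\<forall>z\<in>V. \<bar>h z - h y\<bar> < e))"
    using y(2) zero_less_abs_iff by blast
  with \<open>y \<in> topspace X\<close> show ?thesis
    unfolding discont_points_def by (rule CollectI[of _ y, OF conjI])
qed

lemma discont_points_eq_discrete_support: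
  assumes "T \<subseteq> X derived_set_of topspace X" "X derived_set_of T = {}"
    and support: "{x. h x \<noteq> 0} = T"
  shows "discont_points X h = T"
proof
  show "discont_points X h \<subseteq> T"
    using discont_points_subset_closure_support[of X h] assms(2) support
    by (auto simp: closure_of)
  show "T \<subseteq> discont_points X h"
    using assms discont_points_if_isolated_in_support[of _ X h] by blast
qed

lemma C_ideal_discrete_support_iff:
  assumes "T \<subseteq> X derived_set_of topspace X" "X derived_set_of T = {}"
    and "{x. h x \<noteq> 0} = T"
  shows "h \<in> C_ideal X P \<longleftrightarrow> T \<in> P"
proof -
  have "T \<subseteq> topspace X"
    using assms(1) derived_set_of_subset_topspace by (rule order_trans)
  then have "X closure_of T = T"
    using assms(2) by (auto simp: closure_of)
  then show ?thesis
    using discont_points_eq_discrete_support[OF assms] by (simp add: C_ideal_def)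
qed

lemma unif_conv_on_truncations:
  assumes "c \<longlonglongrightarrow> 0" "\<And>n. w (f n) = c n" "\<And>x. x \<notin> range f \<Longrightarrow> w x = 0"
  shows "unif_conv_on X (\<lambda>k x. if x \<in> f ` {..<k} then w x else 0) w"
  unfolding unif_conv_on_def
proof (intro allI impI)
  fix e :: real assume "e > 0"
  then obtain N where N: "\<And>m. m \<ge> N \<Longrightarrow> \<bar>c m\<bar> < e"
    using assms(1) by (auto simp: lim_sequentially)
  have "\<bar>(if x \<in> f ` {..<k} then w x else 0) - w x\<bar> < e" if "k \<ge> N" for k x
  proof (cases "x \<in> range f \<and> x \<notin> f ` {..<k}")
    case True
    then obtain m where m: "x = f m"
      by blast
    with True have "m \<ge> k"
      by (meson imageI lessThan_iff not_le)
    with m that N assms(2) True show ?thesis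
      by simp
  qed (use \<open>e > 0\<close> assms(3) in auto)
  then show "\<exists>N. \<forall>k\<ge>N. \<forall>x\<in>topspace X. \<bar>(if x \<in> f ` {..<k} then w x else 0) - w x\<bar> < e"
    by blast
qed

lemma range_in_ideal_if_C_ideal_uniformly_closed:
  fixes f :: "nat \<Rightarrow> 'a"
  assumes uniformly_closed: "\<And>g h. (\<forall>n. g n \<in> C_ideal X P) \<Longrightarrow> unif_conv_on X g h
             \<Longrightarrow> h \<in> C_ideal X P"
    and f: "inj f" "range f \<subseteq> X derived_set_of topspace X" "X derived_set_of range f = {}"
    and initial_segments: "\<And>k. f ` {..<k} \<in> P"
  shows "range f \<in> P"
proof -
  define c where "c n = inverse (real (Suc n))" for n
  define w where "w x = (if x \<in> range f then c (inv f x) else 0)" for x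
  define g where "g k x = (if x \<in> f ` {..<k} then w x else 0)" for k x
  have w_f: "w (f n) = c n" for n
    using f(1) by (simp add: w_def)
  have "g k \<in> C_ideal X P" for k
  proof -
    have "X derived_set_of f ` {..<k} = {}"
      using f(3) derived_set_of_mono[of "f ` {..<k}" "range f" X] by blast
    moreover have "{x. g k x \<noteq> 0} = f ` {..<k}"
      using w_f by (auto simp: g_def c_def)
    moreover have "f ` {..<k} \<subseteq> X derived_set_of topspace X"
      using f(2) by blast
    ultimately show ?thesis
      using C_ideal_discrete_support_iff initial_segments by blast
  qed
  moreover have "unif_conv_on X g w"
    unfolding g_def
  proof (rule unif_conv_on_truncations)
    show "c \<longlonglongrightarrow> 0"
      unfolding c_def by (rule LIMSEQ_inverse_real_of_nat)
  qed (simp_all add: w_def f(1))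
  ultimately have "w \<in> C_ideal X P"
    using uniformly_closed by blast
  moreover have "{x. w x \<noteq> 0} = range f"
    using w_f by (auto simp: w_def c_def)
  ultimately show ?thesis
    using C_ideal_discrete_support_iff[OF f(2,3)] by simp
qed

theorem theorem3p2:
  fixes X :: "'a topology"
  assumes "metrizable_space X"
    and "\<And>g f. (\<forall>n. g n \<in> C_ideal X (compact_ideal X)) \<Longrightarrow> unif_conv_on X g f
             \<Longrightarrow> f \<in> C_ideal X (compact_ideal X)"
  shows "X derived_set_of (topspace X) \<in> compact_ideal X"
proof -
  let ?X' = "X derived_set_of topspace X"
  have closed: "closedin X ?X'"
    by (simp add: assms(1) closedin_derived_set_of metrizable_imp_Hausdorff_space)
  have "compactin X ?X'"
  proof (rule ccontr)
    assume "\<not> compactin X ?X'"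
    with assms(1) closed obtain f :: "nat \<Rightarrow> 'a"
      where f: "inj f" "range f \<subseteq> ?X'" "X derived_set_of range f = {}"
      by (rule metrizable_noncompact_closedin_discrete_sequence)
    have segments: "f ` {..<k} \<in> compact_ideal X" for k
    proof -
      have "X derived_set_of f ` {..<k} = {}"
        using f(3) derived_set_of_mono[of "f ` {..<k}" "range f" X] by blast
      moreover have "f ` {..<k} \<subseteq> topspace X"
        using f(2) derived_set_of_subset_topspace[of X] by blast
      ultimately show ?thesis
        by (auto simp: compact_ideal_def closedin_contains_derived_set intro: finite_imp_compactin)
    qed
    have "range f \<in> compact_ideal X"
      using assms(2) f segments by (rule range_in_ideal_if_C_ideal_uniformly_closed)
    then have "compactin X (range f)"
      by (simp add: compact_ideal_def)
    with f(1,3) show False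
      using discrete_compactin_eq_finite[of "range f" X] range_inj_infinite by blast
  qed
  with closed show ?thesis
    by (simp add: compact_ideal_def closedin_subset)
qed

end
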